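(* Let $K,L\subset\mathbb{R}^n$ be nonempty compact sets with connected boundaries $\partial K$, $\partial L$, and with $K\cap L\ne\emptyset$. If neither $L$ is strictly contained in $K$ nor $K$ is strictly contained in $L$, then there exists $z\in\partial K\cap\partial L$.
   Context: "Strictly contained" means contained and not equal. *)

theory Defs
  imports "HOL-Analysis.Analysis"
begin

end

theory Submission
  imports Defs
begin

text \<open>If the boundaries were disjoint, connectedness would force each boundary to lie either
  entirely in the interior of the other set or entirely outside it. Each of the four resulting
  configurations yields a bounded set with empty frontier, namely \<open>K \<union> L\<close>, \<open>K - interior L\<close>,
  \<open>L - interior K\<close> or \<open>K \<inter> L\<close>; in \<open>\<real>\<^sup>n\<close> such a set is empty, which contradicts
  \<open>K \<inter> L \<noteq> {}\<close>, \<open>\<not> K \<subset> L\<close> or \<open>\<not> L \<subset> K\<close>.\<close>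

lemma bounded_frontier_empty_imp_empty:
  fixes S :: "'a::{real_normed_vector, perfect_space} set"
  assumes "bounded S" and "frontier S = {}"
  shows "S = {}"
  using assms frontier_eq_empty not_bounded_UNIV by metis

lemma connected_frontier_disjoint_cases:
  assumes "connected S" and "S \<inter> frontier T = {}"
  shows "S \<subseteq> interior T \<or> S \<inter> T = {}"
proof -
  have "S \<subseteq> T \<or> S \<inter> T = {}"
    using connected_Int_frontier[OF assms(1)] assms(2) by blast
  then show ?thesis
    using assms(2) closure_subset[of T] by (auto simp: frontier_def)
qed

lemma frontier_Un_eq_empty_if_frontiers_in_interiors:
  assumes "frontier K \<subseteq> interior L" and "frontier L \<subseteq> interior K"
  shows "frontier (K \<union> L) = {}"
proof -
  have "frontier (K \<union> L) \<subseteq> interior (K \<union> L)"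
    using frontier_Un_subset[of K L] assms interior_mono[of K "K \<union> L"] interior_mono[of L "K \<union> L"]
    by blast
  then show ?thesis
    by (auto simp: frontier_def)
qed

lemma frontier_Int_eq_empty_if_frontiers_outside:
  assumes "closed K" and "closed L"
    and "frontier K \<inter> L = {}" and "K \<inter> frontier L = {}"
  shows "frontier (K \<inter> L) = {}"
  using frontier_Int_subset[of K L] frontier_subset_closed[OF closed_Int[OF assms(1,2)]] assms(3,4)
  by blast

lemma frontier_Diff_interior_eq_empty:
  assumes "closed K" and "frontier K \<subseteq> interior L" and "K \<inter> frontier L = {}"
  shows "frontier (K - interior L) = {}"
proof -
  have closed: "closed (K - interior L)"
    using assms(1) by (simp add: closed_Diff)
  have "frontier (K - interior L) \<subseteq> frontier K \<union> frontier L"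
    using frontier_Int_subset[of K "- interior L"] frontier_interior_subset[of L]
    by (auto simp: Diff_eq)
  then show ?thesis
    using frontier_subset_closed[OF closed] assms(2,3) by blast
qed

lemma psubset_if_frontier_in_interior:
  fixes K L :: "'a::{real_normed_vector, perfect_space} set"
  assumes "closed K" and "bounded K" and "bounded L" and "L \<noteq> {}"
    and "frontier K \<subseteq> interior L" and "K \<inter> frontier L = {}"
  shows "K \<subset> L"
proof -
  have "K - interior L = {}"
    using bounded_frontier_empty_imp_empty[OF bounded_diff[OF assms(2)]]
      frontier_Diff_interior_eq_empty[OF assms(1,5,6)] by blast
  then have "K \<subseteq> L"
    using interior_subset[of L] by blast
  moreover have "frontier L \<noteq> {}"
    using bounded_frontier_empty_imp_empty[OF assms(3)] assms(4) by blast
  then have "K \<noteq> L"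
    using assms(5) by (auto simp: frontier_def)
  ultimately show ?thesis
    by blast
qed

theorem lemma15:
  fixes K L :: "(real ^ 'n) set"
  assumes "compact K" and "compact L"
    and "K \<noteq> {}" and "L \<noteq> {}"
    and "connected (frontier K)" and "connected (frontier L)"
    and "K \<inter> L \<noteq> {}"
    and "\<not> (L \<subset> K)" and "\<not> (K \<subset> L)"
  shows "\<exists>z. z \<in> frontier K \<inter> frontier L"
proof (rule ccontr)
  assume "\<not> ?thesis"
  then have disjoint: "frontier K \<inter> frontier L = {}"
    by blast
  have K: "closed K" "bounded K" and L: "closed L" "bounded L"
    using assms(1,2) compact_imp_closed compact_imp_bounded by auto
  have "frontier K \<subseteq> interior L \<or> frontier K \<inter> L = {}"
    using connected_frontier_disjoint_cases[OF assms(5) disjoint] .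
  moreover have "frontier L \<subseteq> interior K \<or> frontier L \<inter> K = {}"
    using connected_frontier_disjoint_cases[OF assms(6)] disjoint by blast
  ultimately show False
  proof (elim disjE)
    assume "frontier K \<subseteq> interior L" and "frontier L \<subseteq> interior K"
    then have "frontier (K \<union> L) = {}"
      by (rule frontier_Un_eq_empty_if_frontiers_in_interiors)
    then show False
      using bounded_frontier_empty_imp_empty[of "K \<union> L"] K(2) L(2) assms(3) by auto
  next
    assume "frontier K \<subseteq> interior L" and "frontier L \<inter> K = {}"
    then show False
      using psubset_if_frontier_in_interior[OF K L(2) assms(4)] assms(9) by blast
  next
    assume "frontier K \<inter> L = {}" and "frontier L \<subseteq> interior K"
    then show False
      using psubset_if_frontier_in_interior[OF L K(2) assms(3)] assms(8) by blast
  next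
    assume "frontier K \<inter> L = {}" and "frontier L \<inter> K = {}"
    then have "frontier (K \<inter> L) = {}"
      using frontier_Int_eq_empty_if_frontiers_outside[OF K(1) L(1)] by blast
    then show False
      using bounded_frontier_empty_imp_empty K(2) assms(7) by blast
  qed
qed

end
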